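(* Let $\Lambda$ be an admissible temporal logic over a temporal language $\mathcal L$. Then the canonical model $\mathfrak M_c=(W_c,\preccurlyeq_c,S_c,\ell_c)$ of $\Lambda$ is a deterministic weak quasimodel; that is: $\preccurlyeq_c$ is a partial order on $W_c$; each $\ell_c(\Phi)$ satisfies the type conditions (1)–(9); $\Phi\preccurlyeq_c\Psi$ implies $\ell_c(\Phi)\preccurlyeq_T\ell_c(\Psi)$; for every $\Phi\in W_c$ and every $\varphi\to\psi\in\Phi^-$ there is $\Psi\in W_c$ with $\Phi\preccurlyeq_c\Psi$, $\varphi\in\Psi^+$ and $\psi\in\Psi^-$; and $S_c$ is a monotone function $W_c\to W_c$ such that every pair $(\Phi,S_c(\Phi))$ is sensible.
   Context: Formulas are built from $\bot$ and propositional variables using $\wedge,\vee,\to$ and modalities $\circ,\Diamond,\Box,\forall$. A temporal language $\mathcal L_M$ ($M\subseteq\{\Diamond,\Box,\forall\}$) uses $\bot$, variables, $\wedge,\vee,\to,\circ$ and only modalities in $M$. ${\sf ITL}^0_M$ is the logic over $\mathcal L_M$ axiomatized by intuitionistic propositional logic, (N1) $\neg\circ\bot$, (N2) $\circ\varphi\wedge\circ\psi\to\circ(\varphi\wedge\psi)$, (N3) $\circ(\varphi\vee\psi)\to\circ\varphi\vee\circ\psi$, (N4) $\circ(\varphi\to\psi)\to(\circ\varphi\to\circ\psi)$, rules modus ponens and from $\varphi$ infer $\circ\varphi$; plus, if $\Diamond\in M$, axiom $\varphi\vee\circ\Diamond\varphi\to\Diamond\varphi$ and rules from $\varphi\to\psi$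 infer $\Diamond\varphi\to\Diamond\psi$, from $\circ\varphi\to\varphi$ infer $\Diamond\varphi\to\varphi$; plus, if $\forall\in M$, axioms $\forall\varphi\vee\neg\forall\varphi$, $\forall(\varphi\to\psi)\to(\forall\varphi\to\forall\psi)$, $\forall(\varphi\vee\forall\psi)\to\forall\varphi\vee\forall\psi$, $\forall\varphi\to\varphi$, $\forall\varphi\to\forall\forall\varphi$, $\forall\varphi\leftrightarrow\circ\forall\varphi$ and rule from $\varphi$ infer $\forall\varphi$. An admissible temporal logic over $\mathcal L_M$ is a set of $\mathcal L_M$-formulas containing all substitution instances of the axioms of ${\sf ITL}^0_M$ and closed under its rules. $\Gamma\vdash\Delta$ means there are finite $\Gamma'\subseteq\Gamma$, $\Delta'\subseteq\Delta$ with $\bigwedge\Gamma'\to\bigvee\Delta'\in\Lambda$. A prime $\mathcal L$-type is a pair $\Phi=(\Phi^+,\Phi^-)$ of sets of $\mathcal L$-formulas with $\Phi^+\cup\Phi^-=\mathcal L$ and $\Phi^+\not\vdash\Phi^-$. For pairs, $\Phi\preccurlyeq_T\Psi$ means $\Phi^+\subseteq\Psi^+$ and $\Psi^-\subseteq\Phi^-$. Type conditions: (1) $\Phi^-\cap\Phi^+=\varnothing$; (2) $\bot\notin\Phi^+$; (3) $\varphi\wedge\psi\in\Phi^+\Rightarrow\varphi,\psi\in\Phi^+$; (4) $\varphi\wedge\psi\in\Phi^-\Rightarrow\varphi\in\Phi^-$ or $\psi\in\Phi^-$; (5) $\varphi\vee\psi\in\Phi^+\Rightarrow\varphi\in\Phi^+$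 or $\psi\in\Phi^+$; (6) $\varphi\vee\psi\in\Phi^-\Rightarrow\varphi,\psi\in\Phi^-$; (7) $\varphi\to\psi\in\Phi^+\Rightarrow\varphi\in\Phi^-$ or $\psi\in\Phi^+$; (8) $\varphi\to\psi\in\Phi^-\Rightarrow\psi\in\Phi^-$; (9) $\Diamond\varphi\in\Phi^-\Rightarrow\varphi\in\Phi^-$. A pair $(\Phi,\Psi)$ is sensible if: $\circ\varphi\in\Phi^+\Rightarrow\varphi\in\Psi^+$; $\circ\varphi\in\Phi^-\Rightarrow\varphi\in\Psi^-$; $\Diamond\varphi\in\Phi^+\Rightarrow\varphi\in\Phi^+$ or $\Diamond\varphi\in\Psi^+$; $\Diamond\varphi\in\Phi^-\Rightarrow\Diamond\varphi\in\Psi^-$; $\forall\varphi\in\Phi^+\Leftrightarrow\forall\varphi\in\Psi^+$; $\forall\varphi\in\Phi^-\Leftrightarrow\forall\varphi\in\Psi^-$. The canonical model: $W_c$ is the set of prime $\mathcal L$-types, $\preccurlyeq_c$ is $\preccurlyeq_T$ restricted to $W_c$, $\Phi\mathrel{S_c}\Psi$ iff $(\Phi,\Psi)$ is sensible, and $\ell_c$ is the identity. *)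

theory Defs
  imports Main
begin

datatype fml =
    Bot
  | Var nat
  | And fml fml
  | Or fml fml
  | Imp fml fml
  | Nxt fml
  | Dia fml
  | Bx fml
  | All fml

datatype modality = MDia | MBox | MAll

definition Neg :: "fml \<Rightarrow> fml" where "Neg \<phi> = Imp \<phi> Bot"
definition Top :: fml where "Top = Imp Bot Bot"
definition Iff :: "fml \<Rightarrow> fml \<Rightarrow> fml" where "Iff \<phi> \<psi> = And (Imp \<phi> \<psi>) (Imp \<psi> \<phi>)"

fun inL :: "modality set \<Rightarrow> fml \<Rightarrow> bool" where
  "inL M Bot = True"
| "inL M (Var p) = True"
| "inL M (And a b) = (inL M a \<and> inL M b)"
| "inL M (Or a b) = (inL M a \<and> inL M b)"
| "inL M (Imp a b) = (inL M a \<and> inL M b)"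
| "inL M (Nxt a) = inL M a"
| "inL M (Dia a) = (MDia \<in> M \<and> inL M a)"
| "inL M (Bx a) = (MBox \<in> M \<and> inL M a)"
| "inL M (All a) = (MAll \<in> M \<and> inL M a)"

definition Lang :: "modality set \<Rightarrow> fml set" where
  "Lang M = {\<phi>. inL M \<phi>}"

text \<open>Intuitionistic propositional logic is represented by a standard Hilbert
axiomatization (schemas instantiated with arbitrary L_M-formulas) together with
modus ponens; schema instances are exactly substitution instances.\<close>

definition admissible :: "modality set \<Rightarrow> fml set \<Rightarrow> bool" where
  "admissible M \<Lambda> \<longleftrightarrow>
     \<Lambda> \<subseteq> Lang M \<and>
     \<comment> \<open>IPL axioms\<close>
     (\<forall>\<phi>\<in>Lang M. \<forall>\<psi>\<in>Lang M. \<forall>\<chi>\<in>Lang M.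
        Imp \<phi> (Imp \<psi> \<phi>) \<in> \<Lambda> \<and>
        Imp (Imp \<phi> (Imp \<psi> \<chi>)) (Imp (Imp \<phi> \<psi>) (Imp \<phi> \<chi>)) \<in> \<Lambda> \<and>
        Imp (And \<phi> \<psi>) \<phi> \<in> \<Lambda> \<and>
        Imp (And \<phi> \<psi>) \<psi> \<in> \<Lambda> \<and>
        Imp \<phi> (Imp \<psi> (And \<phi> \<psi>)) \<in> \<Lambda> \<and>
        Imp \<phi> (Or \<phi> \<psi>) \<in> \<Lambda> \<and>
        Imp \<psi> (Or \<phi> \<psi>) \<in> \<Lambda> \<and>
        Imp (Imp \<phi> \<chi>) (Imp (Imp \<psi> \<chi>) (Imp (Or \<phi> \<psi>) \<chi>)) \<in> \<Lambda> \<and>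
        Imp Bot \<phi> \<in> \<Lambda>) \<and>
     \<comment> \<open>(N1)--(N4)\<close>
     Neg (Nxt Bot) \<in> \<Lambda> \<and>
     (\<forall>\<phi>\<in>Lang M. \<forall>\<psi>\<in>Lang M.
        Imp (And (Nxt \<phi>) (Nxt \<psi>)) (Nxt (And \<phi> \<psi>)) \<in> \<Lambda> \<and>
        Imp (Nxt (Or \<phi> \<psi>)) (Or (Nxt \<phi>) (Nxt \<psi>)) \<in> \<Lambda> \<and>
        Imp (Nxt (Imp \<phi> \<psi>)) (Imp (Nxt \<phi>) (Nxt \<psi>)) \<in> \<Lambda>) \<and>
     \<comment> \<open>modus ponens and \<circ>-necessitation\<close>
     (\<forall>\<phi> \<psi>. \<phi> \<in> \<Lambda> \<longrightarrow> Imp \<phi> \<psi> \<in> \<Lambda> \<longrightarrow> \<psi> \<in> \<Lambda>) \<and>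
     (\<forall>\<phi>. \<phi> \<in> \<Lambda> \<longrightarrow> Nxt \<phi> \<in> \<Lambda>) \<and>
     \<comment> \<open>\<Diamond>\<close>
     (MDia \<in> M \<longrightarrow>
        (\<forall>\<phi>\<in>Lang M. Imp (Or \<phi> (Nxt (Dia \<phi>))) (Dia \<phi>) \<in> \<Lambda>) \<and>
        (\<forall>\<phi> \<psi>. Imp \<phi> \<psi> \<in> \<Lambda> \<longrightarrow> Imp (Dia \<phi>) (Dia \<psi>) \<in> \<Lambda>) \<and>
        (\<forall>\<phi>. Imp (Nxt \<phi>) \<phi> \<in> \<Lambda> \<longrightarrow> Imp (Dia \<phi>) \<phi> \<in> \<Lambda>)) \<and>
     \<comment> \<open>\<forall>\<close>
     (MAll \<in> M \<longrightarrow>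
        (\<forall>\<phi>\<in>Lang M. \<forall>\<psi>\<in>Lang M.
           Or (All \<phi>) (Neg (All \<phi>)) \<in> \<Lambda> \<and>
           Imp (All (Imp \<phi> \<psi>)) (Imp (All \<phi>) (All \<psi>)) \<in> \<Lambda> \<and>
           Imp (All (Or \<phi> (All \<psi>))) (Or (All \<phi>) (All \<psi>)) \<in> \<Lambda> \<and>
           Imp (All \<phi>) \<phi> \<in> \<Lambda> \<and>
           Imp (All \<phi>) (All (All \<phi>)) \<in> \<Lambda> \<and>
           Iff (All \<phi>) (Nxt (All \<phi>)) \<in> \<Lambda>) \<and>
        (\<forall>\<phi>. \<phi> \<in> \<Lambda> \<longrightarrow> All \<phi> \<in> \<Lambda>))"

fun conjs :: "fml list \<Rightarrow> fml" where
  "conjs [] = Top"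
| "conjs [\<phi>] = \<phi>"
| "conjs (\<phi> # \<phi>s) = And \<phi> (conjs \<phi>s)"

fun disjs :: "fml list \<Rightarrow> fml" where
  "disjs [] = Bot"
| "disjs [\<phi>] = \<phi>"
| "disjs (\<phi> # \<phi>s) = Or \<phi> (disjs \<phi>s)"

definition derives :: "fml set \<Rightarrow> fml set \<Rightarrow> fml set \<Rightarrow> bool" where
  "derives \<Lambda> \<Gamma> \<Delta> \<longleftrightarrow>
     (\<exists>gs ds. set gs \<subseteq> \<Gamma> \<and> set ds \<subseteq> \<Delta> \<and> Imp (conjs gs) (disjs ds) \<in> \<Lambda>)"

type_synonym ftype = "fml set \<times> fml set"

definition prime_type :: "modality set \<Rightarrow> fml set \<Rightarrow> ftype \<Rightarrow> bool" where
  "prime_type M \<Lambda> \<Phi> \<longleftrightarrow>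
     fst \<Phi> \<subseteq> Lang M \<and> snd \<Phi> \<subseteq> Lang M \<and>
     fst \<Phi> \<union> snd \<Phi> = Lang M \<and> \<not> derives \<Lambda> (fst \<Phi>) (snd \<Phi>)"

definition leT :: "ftype \<Rightarrow> ftype \<Rightarrow> bool" where
  "leT \<Phi> \<Psi> \<longleftrightarrow> fst \<Phi> \<subseteq> fst \<Psi> \<and> snd \<Psi> \<subseteq> snd \<Phi>"

definition type_conds :: "ftype \<Rightarrow> bool" where
  "type_conds \<Phi> \<longleftrightarrow> (let P = fst \<Phi>; N = snd \<Phi> in
     P \<inter> N = {} \<and>
     Bot \<notin> P \<and>
     (\<forall>\<phi> \<psi>. And \<phi> \<psi> \<in> P \<longrightarrow> \<phi> \<in> P \<and> \<psi> \<in> P) \<and>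
     (\<forall>\<phi> \<psi>. And \<phi> \<psi> \<in> N \<longrightarrow> \<phi> \<in> N \<or> \<psi> \<in> N) \<and>
     (\<forall>\<phi> \<psi>. Or \<phi> \<psi> \<in> P \<longrightarrow> \<phi> \<in> P \<or> \<psi> \<in> P) \<and>
     (\<forall>\<phi> \<psi>. Or \<phi> \<psi> \<in> N \<longrightarrow> \<phi> \<in> N \<and> \<psi> \<in> N) \<and>
     (\<forall>\<phi> \<psi>. Imp \<phi> \<psi> \<in> P \<longrightarrow> \<phi> \<in> N \<or> \<psi> \<in> P) \<and>
     (\<forall>\<phi> \<psi>. Imp \<phi> \<psi> \<in> N \<longrightarrow> \<psi> \<in> N) \<and>
     (\<forall>\<phi>. Dia \<phi> \<in> N \<longrightarrow> \<phi> \<in> N))"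

definition sensible :: "ftype \<Rightarrow> ftype \<Rightarrow> bool" where
  "sensible \<Phi> \<Psi> \<longleftrightarrow>
     (\<forall>\<phi>. Nxt \<phi> \<in> fst \<Phi> \<longrightarrow> \<phi> \<in> fst \<Psi>) \<and>
     (\<forall>\<phi>. Nxt \<phi> \<in> snd \<Phi> \<longrightarrow> \<phi> \<in> snd \<Psi>) \<and>
     (\<forall>\<phi>. Dia \<phi> \<in> fst \<Phi> \<longrightarrow> \<phi> \<in> fst \<Phi> \<or> Dia \<phi> \<in> fst \<Psi>) \<and>
     (\<forall>\<phi>. Dia \<phi> \<in> snd \<Phi> \<longrightarrow> Dia \<phi> \<in> snd \<Psi>) \<and>
     (\<forall>\<phi>. All \<phi> \<in> fst \<Phi> \<longleftrightarrow> All \<phi> \<in> fst \<Psi>) \<and>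
     (\<forall>\<phi>. All \<phi> \<in> snd \<Phi> \<longleftrightarrow> All \<phi> \<in> snd \<Psi>)"

definition Wc :: "modality set \<Rightarrow> fml set \<Rightarrow> ftype set" where
  "Wc M \<Lambda> = {\<Phi>. prime_type M \<Lambda> \<Phi>}"

definition Sc :: "ftype \<Rightarrow> ftype \<Rightarrow> bool" where
  "Sc \<Phi> \<Psi> \<longleftrightarrow> sensible \<Phi> \<Psi>"

text \<open>A deterministic weak quasimodel (W, \<preccurlyeq>, S, \<ell>), with S given as a relation
that is required to be a (total, single-valued) monotone function on W.\<close>
definition det_weak_quasimodel ::
  "'w set \<Rightarrow> ('w \<Rightarrow> 'w \<Rightarrow> bool) \<Rightarrow> ('w \<Rightarrow> 'w \<Rightarrow> bool) \<Rightarrow> ('w \<Rightarrow> ftype) \<Rightarrow> bool" where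
  "det_weak_quasimodel W le S lab \<longleftrightarrow>
     \<comment> \<open>partial order\<close>
     (\<forall>w\<in>W. le w w) \<and>
     (\<forall>u\<in>W. \<forall>v\<in>W. \<forall>w\<in>W. le u v \<longrightarrow> le v w \<longrightarrow> le u w) \<and>
     (\<forall>u\<in>W. \<forall>v\<in>W. le u v \<longrightarrow> le v u \<longrightarrow> u = v) \<and>
     \<comment> \<open>labels are types\<close>
     (\<forall>w\<in>W. type_conds (lab w)) \<and>
     \<comment> \<open>monotone labelling\<close>
     (\<forall>u\<in>W. \<forall>v\<in>W. le u v \<longrightarrow> leT (lab u) (lab v)) \<and>
     \<comment> \<open>implications in the negative part are witnessed\<close>
     (\<forall>w\<in>W. \<forall>\<phi> \<psi>. Imp \<phi> \<psi> \<in> snd (lab w) \<longrightarrow>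
        (\<exists>v\<in>W. le w v \<and> \<phi> \<in> fst (lab v) \<and> \<psi> \<in> snd (lab v))) \<and>
     \<comment> \<open>S is a function W \<rightarrow> W\<close>
     (\<forall>w\<in>W. \<exists>!v. v \<in> W \<and> S w v) \<and>
     \<comment> \<open>S is monotone\<close>
     (\<forall>u\<in>W. \<forall>v\<in>W. \<forall>u'\<in>W. \<forall>v'\<in>W. le u v \<longrightarrow> S u u' \<longrightarrow> S v v' \<longrightarrow> le u' v') \<and>
     \<comment> \<open>every S-pair is sensible\<close>
     (\<forall>w\<in>W. \<forall>v\<in>W. S w v \<longrightarrow> sensible (lab w) (lab v))"

end

theory Submission
  imports Defs
begin

(* Prime types are deductively closed and split derivable conjunctions and disjunctions, which
   gives the type conditions; an implication a \<rightarrow> b in \<Phi>\<^sup>- is refuted by a Lindenbaum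
   extension of (\<Phi>\<^sup>+ \<union> {a}, {b}), which is consistent by the deduction theorem.
   The successor relation is a function: every sensible successor of a prime type \<Phi> contains,
   and being prime therefore equals, next_type \<Phi> = ({a. \<circ>a \<in> \<Phi>\<^sup>+}, {a. \<circ>a \<in> \<Phi>\<^sup>-}).
   This pair is prime because \<circ> commutes with finite conjunctions and disjunctions (N1-N4), and
   sensible because of the unfolding \<Diamond>a \<leftrightarrow> a \<or> \<circ>\<Diamond>a and the axiom \<forall>a \<leftrightarrow> \<circ>\<forall>a;
   monotonicity of next_type is immediate. *)

lemma mem_Lang_iff [simp]: "a \<in> Lang M \<longleftrightarrow> inL M a"
  by (simp add: Lang_def)

lemma inL_Top [simp]: "inL M Top"
  by (simp add: Top_def)

lemma inL_conjs: "set gs \<subseteq> Lang M \<Longrightarrow> inL M (conjs gs)"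
  by (induction gs rule: conjs.induct) auto

lemma inL_disjs: "set ds \<subseteq> Lang M \<Longrightarrow> inL M (disjs ds)"
  by (induction ds rule: disjs.induct) auto

lemma derives_mono: "derives \<Lambda> \<Gamma> \<Delta> \<Longrightarrow> \<Gamma> \<subseteq> \<Gamma>' \<Longrightarrow> \<Delta> \<subseteq> \<Delta>' \<Longrightarrow> derives \<Lambda> \<Gamma>' \<Delta>'"
  unfolding derives_def by blast

lemma not_derives_Union_chain:
  assumes "C \<noteq> {}" and chain: "subset.chain UNIV C"
    and consistent: "\<And>X. X \<in> C \<Longrightarrow> \<not> derives \<Lambda> (Inl -` X) (Inr -` X)"
  shows "\<not> derives \<Lambda> (Inl -` \<Union>C) (Inr -` \<Union>C)"
proof
  assume "derives \<Lambda> (Inl -` \<Union>C) (Inr -` \<Union>C)"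
  then obtain gs ds where gs: "set gs \<subseteq> Inl -` \<Union>C" and ds: "set ds \<subseteq> Inr -` \<Union>C"
    and derivation: "Imp (conjs gs) (disjs ds) \<in> \<Lambda>"
    unfolding derives_def by blast
  have "finite (Inl ` set gs \<union> Inr ` set ds)" "Inl ` set gs \<union> Inr ` set ds \<subseteq> \<Union>C"
    using gs ds by auto
  then obtain X where "X \<in> C" "Inl ` set gs \<union> Inr ` set ds \<subseteq> X"
    using finite_subset_Union_chain[OF _ _ \<open>C \<noteq> {}\<close> chain] by metis
  moreover from this have "derives \<Lambda> (Inl -` X) (Inr -` X)"
    using derivation unfolding derives_def by blast
  ultimately show False using consistent by blast
qed

lemma prime_type_inL_fst: "prime_type M \<Lambda> \<Phi> \<Longrightarrow> a \<in> fst \<Phi> \<Longrightarrow> inL M a"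
  unfolding prime_type_def by auto

lemma prime_type_inL_snd: "prime_type M \<Lambda> \<Phi> \<Longrightarrow> a \<in> snd \<Phi> \<Longrightarrow> inL M a"
  unfolding prime_type_def by auto

lemma prime_type_cases: "prime_type M \<Lambda> \<Phi> \<Longrightarrow> inL M a \<Longrightarrow> a \<in> fst \<Phi> \<or> a \<in> snd \<Phi>"
  unfolding prime_type_def by auto

lemma prime_type_no_derivation:
  "prime_type M \<Lambda> \<Phi> \<Longrightarrow> set gs \<subseteq> fst \<Phi> \<Longrightarrow> set ds \<subseteq> snd \<Phi> \<Longrightarrow> Imp (conjs gs) (disjs ds) \<notin> \<Lambda>"
  unfolding prime_type_def derives_def by blast

lemma prime_type_split:
  assumes \<Phi>: "prime_type M \<Lambda> \<Phi>" and "set gs \<subseteq> Lang M" "set ds \<subseteq> Lang M"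
    and "Imp (conjs gs) (disjs ds) \<in> \<Lambda>"
  shows "(\<exists>g\<in>set gs. g \<in> snd \<Phi>) \<or> (\<exists>d\<in>set ds. d \<in> fst \<Phi>)"
proof (rule ccontr)
  assume "\<not> ?thesis"
  then have "set gs \<subseteq> fst \<Phi>" "set ds \<subseteq> snd \<Phi>"
    using assms(2,3) prime_type_cases[OF \<Phi>] unfolding Lang_def by blast+
  then show False using prime_type_no_derivation[OF \<Phi>] assms(4) by blast
qed

lemma leT_refl: "leT \<Phi> \<Phi>"
  by (simp add: leT_def)

lemma leT_trans: "leT \<Phi> \<Psi> \<Longrightarrow> leT \<Psi> \<Theta> \<Longrightarrow> leT \<Phi> \<Theta>"
  unfolding leT_def by blast

lemma leT_antisym: "leT \<Phi> \<Psi> \<Longrightarrow> leT \<Psi> \<Phi> \<Longrightarrow> \<Phi> = \<Psi>"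
  unfolding leT_def prod_eq_iff by blast

lemma mem_Wc_iff: "\<Phi> \<in> Wc M \<Lambda> \<longleftrightarrow> prime_type M \<Lambda> \<Phi>"
  by (simp add: Wc_def)

definition next_type :: "ftype \<Rightarrow> ftype" where
  "next_type \<Phi> = ({a. Nxt a \<in> fst \<Phi>}, {a. Nxt a \<in> snd \<Phi>})"

lemma next_type_mono: "leT \<Phi> \<Psi> \<Longrightarrow> leT (next_type \<Phi>) (next_type \<Psi>)"
  unfolding leT_def next_type_def by auto

locale intuitionistic_logic =
  fixes M :: "modality set" and \<Lambda> :: "fml set"
  assumes theorem_inL: "a \<in> \<Lambda> \<Longrightarrow> inL M a"
    and ax_K: "inL M a \<Longrightarrow> inL M b \<Longrightarrow> Imp a (Imp b a) \<in> \<Lambda>"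
    and ax_S: "inL M a \<Longrightarrow> inL M b \<Longrightarrow> inL M c \<Longrightarrow>
      Imp (Imp a (Imp b c)) (Imp (Imp a b) (Imp a c)) \<in> \<Lambda>"
    and ax_conjD1: "inL M a \<Longrightarrow> inL M b \<Longrightarrow> Imp (And a b) a \<in> \<Lambda>"
    and ax_conjD2: "inL M a \<Longrightarrow> inL M b \<Longrightarrow> Imp (And a b) b \<in> \<Lambda>"
    and ax_conjI: "inL M a \<Longrightarrow> inL M b \<Longrightarrow> Imp a (Imp b (And a b)) \<in> \<Lambda>"
    and ax_disjI1: "inL M a \<Longrightarrow> inL M b \<Longrightarrow> Imp a (Or a b) \<in> \<Lambda>"
    and ax_disjI2: "inL M a \<Longrightarrow> inL M b \<Longrightarrow> Imp b (Or a b) \<in> \<Lambda>"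
    and ax_disjE: "inL M a \<Longrightarrow> inL M b \<Longrightarrow> inL M c \<Longrightarrow>
      Imp (Imp a c) (Imp (Imp b c) (Imp (Or a b) c)) \<in> \<Lambda>"
    and ax_botE: "inL M a \<Longrightarrow> Imp Bot a \<in> \<Lambda>"
    and modus_ponens: "a \<in> \<Lambda> \<Longrightarrow> Imp a b \<in> \<Lambda> \<Longrightarrow> b \<in> \<Lambda>"
begin

lemma theorem_imp_inL: "Imp a b \<in> \<Lambda> \<Longrightarrow> inL M a \<and> inL M b"
  using theorem_inL by fastforce

lemma imp_refl:
  assumes a: "inL M a"
  shows "Imp a a \<in> \<Lambda>"
proof -
  have aa: "inL M (Imp a a)" using a by simp
  show ?thesis
    using modus_ponens[OF ax_K[OF a a] modus_ponens[OF ax_K[OF a aa] ax_S[OF a aa a]]] .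
qed

lemma imp_weaken: "b \<in> \<Lambda> \<Longrightarrow> inL M a \<Longrightarrow> Imp a b \<in> \<Lambda>"
  by (rule modus_ponens[OF _ ax_K[OF theorem_inL]])

lemma imp_mp:
  assumes ab: "Imp a b \<in> \<Lambda>" and abc: "Imp a (Imp b c) \<in> \<Lambda>"
  shows "Imp a c \<in> \<Lambda>"
proof -
  have "inL M a" "inL M b" "inL M c" using theorem_imp_inL[OF ab] theorem_imp_inL[OF abc] by auto
  then show ?thesis using modus_ponens[OF ab modus_ponens[OF abc ax_S]] by blast
qed

lemma imp_trans: "Imp a b \<in> \<Lambda> \<Longrightarrow> Imp b c \<in> \<Lambda> \<Longrightarrow> Imp a c \<in> \<Lambda>"
  using imp_mp imp_weaken theorem_imp_inL by blast

lemma imp_conjI: "Imp c a \<in> \<Lambda> \<Longrightarrow> Imp c b \<in> \<Lambda> \<Longrightarrow> Imp c (And a b) \<in> \<Lambda>"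
  using imp_mp[OF _ imp_trans[OF _ ax_conjI]] theorem_imp_inL by blast

lemma imp_disjE: "Imp a c \<in> \<Lambda> \<Longrightarrow> Imp b c \<in> \<Lambda> \<Longrightarrow> Imp (Or a b) c \<in> \<Lambda>"
  using modus_ponens[OF _ modus_ponens[OF _ ax_disjE]] theorem_imp_inL by blast

lemma imp_curry:
  assumes h: "Imp (And a b) c \<in> \<Lambda>"
  shows "Imp a (Imp b c) \<in> \<Lambda>"
proof -
  have a: "inL M a" and b: "inL M b" and c: "inL M c" using theorem_imp_inL[OF h] by auto
  have "Imp (Imp b (And a b)) (Imp b c) \<in> \<Lambda>"
    using modus_ponens[OF imp_weaken[OF h b] ax_S] a b c by simp
  then show ?thesis using imp_trans[OF ax_conjI[OF a b]] by blast
qed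

lemma imp_uncurry:
  assumes h: "Imp a (Imp b c) \<in> \<Lambda>"
  shows "Imp (And a b) c \<in> \<Lambda>"
proof -
  have a: "inL M a" and b: "inL M b" using theorem_imp_inL[OF h] by auto
  show ?thesis using imp_mp[OF ax_conjD2[OF a b] imp_trans[OF ax_conjD1[OF a b] h]] .
qed

lemma imp_conj_commute: "inL M a \<Longrightarrow> inL M b \<Longrightarrow> Imp (And a b) (And b a) \<in> \<Lambda>"
  by (rule imp_conjI[OF ax_conjD2 ax_conjD1])

lemma imp_conj_disjE:
  assumes h1: "Imp (And a b) x \<in> \<Lambda>" and h2: "Imp (And a c) x \<in> \<Lambda>"
  shows "Imp (And a (Or b c)) x \<in> \<Lambda>"
proof -
  have a: "inL M a" and b: "inL M b" and c: "inL M c"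
    using theorem_imp_inL[OF h1] theorem_imp_inL[OF h2] by auto
  have "Imp (Or b c) (Imp a x) \<in> \<Lambda>"
    using imp_disjE[OF imp_curry[OF imp_trans[OF imp_conj_commute[OF b a] h1]]
        imp_curry[OF imp_trans[OF imp_conj_commute[OF c a] h2]]] .
  then have "Imp (And (Or b c) a) x \<in> \<Lambda>" by (rule imp_uncurry)
  then show ?thesis using imp_trans[OF imp_conj_commute] a b c by simp
qed

lemma imp_cut:
  assumes h1: "Imp a (Or b c) \<in> \<Lambda>" and h2: "Imp (And a c) b \<in> \<Lambda>"
  shows "Imp a b \<in> \<Lambda>"
proof -
  have a: "inL M a" and b: "inL M b" using theorem_imp_inL[OF h1] by auto
  have "Imp a (And a (Or b c)) \<in> \<Lambda>" by (rule imp_conjI[OF imp_refl[OF a] h1])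
  moreover have "Imp (And a (Or b c)) b \<in> \<Lambda>" by (rule imp_conj_disjE[OF ax_conjD2[OF a b] h2])
  ultimately show ?thesis by (rule imp_trans)
qed

lemma imp_conj_mono: "Imp a a' \<in> \<Lambda> \<Longrightarrow> Imp b b' \<in> \<Lambda> \<Longrightarrow> Imp (And a b) (And a' b') \<in> \<Lambda>"
  using imp_conjI[OF imp_trans[OF ax_conjD1] imp_trans[OF ax_conjD2]] theorem_imp_inL by blast

lemma imp_disj_mono: "Imp a a' \<in> \<Lambda> \<Longrightarrow> Imp b b' \<in> \<Lambda> \<Longrightarrow> Imp (Or a b) (Or a' b') \<in> \<Lambda>"
  using imp_disjE[OF imp_trans[OF _ ax_disjI1] imp_trans[OF _ ax_disjI2]] theorem_imp_inL by blast

lemma iff_theoremD: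
  assumes h: "Iff a b \<in> \<Lambda>"
  shows "Imp a b \<in> \<Lambda>" and "Imp b a \<in> \<Lambda>"
proof -
  have "inL M (Imp a b)" "inL M (Imp b a)" using theorem_inL[OF h] by (auto simp: Iff_def)
  then show "Imp a b \<in> \<Lambda>" "Imp b a \<in> \<Lambda>"
    using modus_ponens[OF h[unfolded Iff_def]] ax_conjD1 ax_conjD2 by blast+
qed

lemma Top_theorem: "Top \<in> \<Lambda>"
  unfolding Top_def by (rule imp_refl) simp

lemma imp_conjs_member: "set gs \<subseteq> Lang M \<Longrightarrow> g \<in> set gs \<Longrightarrow> Imp (conjs gs) g \<in> \<Lambda>"
proof (induction gs rule: conjs.induct)
  case (3 x y zs)
  have "inL M x" "inL M (conjs (y # zs))" using "3.prems"(1) by (simp, intro inL_conjs) simp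
  with 3 show ?case using ax_conjD1 imp_trans[OF ax_conjD2] by auto
qed (auto intro: imp_refl)

lemma imp_conjsI: "inL M c \<Longrightarrow> (\<And>g. g \<in> set gs \<Longrightarrow> Imp c g \<in> \<Lambda>) \<Longrightarrow> Imp c (conjs gs) \<in> \<Lambda>"
  by (induction gs rule: conjs.induct) (auto intro: imp_conjI imp_weaken[OF Top_theorem])

lemma imp_disjs_member: "set ds \<subseteq> Lang M \<Longrightarrow> d \<in> set ds \<Longrightarrow> Imp d (disjs ds) \<in> \<Lambda>"
proof (induction ds rule: disjs.induct)
  case (3 x y zs)
  have "inL M x" "inL M (disjs (y # zs))" using "3.prems"(1) by (simp, intro inL_disjs) simp
  with 3 show ?case using ax_disjI1 imp_trans[OF _ ax_disjI2] by auto
qed (auto intro: imp_refl)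

lemma imp_disjsE: "inL M c \<Longrightarrow> (\<And>d. d \<in> set ds \<Longrightarrow> Imp d c \<in> \<Lambda>) \<Longrightarrow> Imp (disjs ds) c \<in> \<Lambda>"
  by (induction ds rule: disjs.induct) (auto intro: imp_disjE ax_botE)

lemma imp_conjs_subset:
  "set hs \<subseteq> Lang M \<Longrightarrow> set gs \<subseteq> set hs \<Longrightarrow> Imp (conjs hs) (conjs gs) \<in> \<Lambda>"
  by (blast intro: imp_conjsI inL_conjs imp_conjs_member)

lemma imp_disjs_subset:
  "set es \<subseteq> Lang M \<Longrightarrow> set ds \<subseteq> set es \<Longrightarrow> Imp (disjs ds) (disjs es) \<in> \<Lambda>"
  by (blast intro: imp_disjsE inL_disjs imp_disjs_member)

lemma imp_conjs_insert:
  assumes hs: "set hs \<subseteq> Lang M" and c: "inL M c" and gs: "set gs \<subseteq> insert c (set hs)"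
  shows "Imp (And (conjs hs) c) (conjs gs) \<in> \<Lambda>"
proof (rule imp_conjsI)
  show "inL M (And (conjs hs) c)" using inL_conjs[OF hs] c by simp
  fix g assume "g \<in> set gs"
  then consider "g = c" | "g \<in> set hs" using gs by blast
  then show "Imp (And (conjs hs) c) g \<in> \<Lambda>"
  proof cases
    case 1
    then show ?thesis using ax_conjD2[OF inL_conjs[OF hs] c] by simp
  next
    case 2
    then show ?thesis
      using imp_trans[OF ax_conjD1[OF inL_conjs[OF hs] c] imp_conjs_member[OF hs]] by simp
  qed
qed

lemma imp_disjs_insert:
  assumes es: "set es \<subseteq> Lang M" and c: "inL M c" and ds: "set ds \<subseteq> insert c (set es)"
  shows "Imp (disjs ds) (Or (disjs es) c) \<in> \<Lambda>"
proof (rule imp_disjsE)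
  show "inL M (Or (disjs es) c)" using inL_disjs[OF es] c by simp
  fix d assume "d \<in> set ds"
  then consider "d = c" | "d \<in> set es" using ds by blast
  then show "Imp d (Or (disjs es) c) \<in> \<Lambda>"
  proof cases
    case 1
    then show ?thesis using ax_disjI2[OF inL_disjs[OF es] c] by simp
  next
    case 2
    then show ?thesis
      using imp_trans[OF imp_disjs_member[OF es] ax_disjI1[OF inL_disjs[OF es] c]] by simp
  qed
qed

lemma derives_cut:
  assumes c: "inL M c" and \<Gamma>: "\<Gamma> \<subseteq> Lang M" and \<Delta>: "\<Delta> \<subseteq> Lang M"
    and left: "derives \<Lambda> (insert c \<Gamma>) \<Delta>" and right: "derives \<Lambda> \<Gamma> (insert c \<Delta>)"
  shows "derives \<Lambda> \<Gamma> \<Delta>"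
proof -
  obtain gs1 ds1 where gs1: "set gs1 \<subseteq> insert c \<Gamma>" and ds1: "set ds1 \<subseteq> \<Delta>"
    and derivation1: "Imp (conjs gs1) (disjs ds1) \<in> \<Lambda>"
    using left unfolding derives_def by blast
  obtain gs2 ds2 where gs2: "set gs2 \<subseteq> \<Gamma>" and ds2: "set ds2 \<subseteq> insert c \<Delta>"
    and derivation2: "Imp (conjs gs2) (disjs ds2) \<in> \<Lambda>"
    using right unfolding derives_def by blast
  define hs where "hs = filter (\<lambda>x. x \<noteq> c) gs1 @ gs2"
  define es where "es = filter (\<lambda>x. x \<noteq> c) ds2 @ ds1"
  have hs_sub: "set hs \<subseteq> \<Gamma>" and es_sub: "set es \<subseteq> \<Delta>"
    using gs1 gs2 ds1 ds2 by (auto simp: hs_def es_def)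
  then have hs_L: "set hs \<subseteq> Lang M" and es_L: "set es \<subseteq> Lang M" using \<Gamma> \<Delta> by auto
  have "Imp (conjs hs) (Or (disjs es) c) \<in> \<Lambda>"
    using imp_conjs_subset[OF hs_L, of gs2] derivation2 imp_disjs_insert[OF es_L c, of ds2]
    by (auto simp: hs_def es_def intro: imp_trans)
  moreover have "Imp (And (conjs hs) c) (disjs es) \<in> \<Lambda>"
    using imp_conjs_insert[OF hs_L c, of gs1] derivation1 imp_disjs_subset[OF es_L, of ds1] gs1
    by (auto simp: hs_def es_def intro: imp_trans)
  ultimately have "Imp (conjs hs) (disjs es) \<in> \<Lambda>" by (rule imp_cut)
  then show ?thesis using hs_sub es_sub unfolding derives_def by blast
qed

lemma derives_imp:
  assumes \<Gamma>: "\<Gamma> \<subseteq> Lang M" and a: "inL M a" and b: "inL M b"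
    and "derives \<Lambda> (insert a \<Gamma>) {b}"
  shows "derives \<Lambda> \<Gamma> {Imp a b}"
proof -
  obtain gs ds where gs: "set gs \<subseteq> insert a \<Gamma>" and ds: "set ds \<subseteq> {b}"
    and derivation: "Imp (conjs gs) (disjs ds) \<in> \<Lambda>"
    using assms(4) unfolding derives_def by blast
  define hs where "hs = filter (\<lambda>x. x \<noteq> a) gs"
  have hs_sub: "set hs \<subseteq> \<Gamma>" using gs by (auto simp: hs_def)
  have "Imp (And (conjs hs) a) (conjs gs) \<in> \<Lambda>"
    using imp_conjs_insert[of hs a gs] hs_sub \<Gamma> a gs by (auto simp: hs_def)
  moreover have "Imp (disjs ds) b \<in> \<Lambda>"
    using imp_disjsE[OF b, of ds] ds imp_refl[OF b] by blast
  ultimately have "Imp (And (conjs hs) a) b \<in> \<Lambda>"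
    using derivation imp_trans by blast
  then have "Imp (conjs hs) (disjs [Imp a b]) \<in> \<Lambda>" by (simp add: imp_curry)
  with hs_sub show ?thesis
    unfolding derives_def by (intro exI[of _ hs] exI[of _ "[Imp a b]"]) simp
qed

lemma lindenbaum:
  assumes \<Gamma>: "\<Gamma> \<subseteq> Lang M" and \<Delta>: "\<Delta> \<subseteq> Lang M" and consistent: "\<not> derives \<Lambda> \<Gamma> \<Delta>"
  obtains \<Phi> where "prime_type M \<Lambda> \<Phi>" "\<Gamma> \<subseteq> fst \<Phi>" "\<Delta> \<subseteq> snd \<Phi>"
proof -
  (* A pair (\<Gamma>, \<Delta>) is encoded as \<Gamma> <+> \<Delta>, so that Zorn's lemma for inclusion applies. *)
  define A where "A = {X. \<Gamma> <+> \<Delta> \<subseteq> X \<and> X \<subseteq> Lang M <+> Lang M \<and>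
    \<not> derives \<Lambda> (Inl -` X) (Inr -` X)}"
  have "Inl -` (\<Gamma> <+> \<Delta>) = \<Gamma>" "Inr -` (\<Gamma> <+> \<Delta>) = \<Delta>" by auto
  then have "\<Gamma> <+> \<Delta> \<in> A" using \<Gamma> \<Delta> consistent by (auto simp: A_def)
  moreover have "\<Union>C \<in> A" if "C \<noteq> {}" "subset.chain A C" for C
    using that not_derives_Union_chain[of C \<Lambda>] unfolding A_def subset_chain_def by blast
  ultimately obtain X where X: "X \<in> A" and maximal: "\<And>Y. Y \<in> A \<Longrightarrow> X \<subseteq> Y \<Longrightarrow> Y = X"
    using subset_Zorn_nonempty[of A] by blast
  define \<Phi> where "\<Phi> = (Inl -` X, Inr -` X)"
  have \<Phi>_consistent: "\<not> derives \<Lambda> (fst \<Phi>) (snd \<Phi>)" and \<Phi>_L: "fst \<Phi> \<union> snd \<Phi> \<subseteq> Lang M"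
    using X by (auto simp: A_def \<Phi>_def)
  have total: "c \<in> fst \<Phi> \<union> snd \<Phi>" if c: "inL M c" for c
  proof (rule ccontr)
    assume new: "c \<notin> fst \<Phi> \<union> snd \<Phi>"
    have "derives \<Lambda> (insert c (fst \<Phi>)) (snd \<Phi>)"
    proof (rule ccontr)
      assume "\<not> derives \<Lambda> (insert c (fst \<Phi>)) (snd \<Phi>)"
      moreover have "Inl -` insert (Inl c) X = insert c (fst \<Phi>)" "Inr -` insert (Inl c) X = snd \<Phi>"
        by (auto simp: \<Phi>_def)
      ultimately have "insert (Inl c) X \<in> A" using X c by (auto simp: A_def \<Phi>_def)
      then show False using maximal new by (fastforce simp: \<Phi>_def)
    qed
    moreover have "derives \<Lambda> (fst \<Phi>) (insert c (snd \<Phi>))"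
    proof (rule ccontr)
      assume "\<not> derives \<Lambda> (fst \<Phi>) (insert c (snd \<Phi>))"
      moreover have "Inl -` insert (Inr c) X = fst \<Phi>" "Inr -` insert (Inr c) X = insert c (snd \<Phi>)"
        by (auto simp: \<Phi>_def)
      ultimately have "insert (Inr c) X \<in> A" using X c by (auto simp: A_def \<Phi>_def)
      then show False using maximal new by (fastforce simp: \<Phi>_def)
    qed
    ultimately show False using derives_cut[OF c] \<Phi>_L \<Phi>_consistent by blast
  qed
  then have "fst \<Phi> \<union> snd \<Phi> = Lang M" using \<Phi>_L unfolding Lang_def by blast
  then have "prime_type M \<Lambda> \<Phi>" using \<Phi>_consistent unfolding prime_type_def by blast
  moreover have "\<Gamma> \<subseteq> fst \<Phi>" "\<Delta> \<subseteq> snd \<Phi>" using X by (auto simp: A_def \<Phi>_def)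
  ultimately show ?thesis by (rule that)
qed

lemma prime_type_disjoint: "prime_type M \<Lambda> \<Phi> \<Longrightarrow> a \<in> fst \<Phi> \<Longrightarrow> a \<notin> snd \<Phi>"
  using prime_type_no_derivation[of M \<Lambda> \<Phi> "[a]" "[a]"] imp_refl prime_type_inL_fst by auto

lemma prime_type_closed_fst:
  assumes \<Phi>: "prime_type M \<Lambda> \<Phi>" and "set gs \<subseteq> fst \<Phi>" "Imp (conjs gs) a \<in> \<Lambda>"
  shows "a \<in> fst \<Phi>"
  using prime_type_split[OF \<Phi>, of gs "[a]"] assms prime_type_inL_fst[OF \<Phi>] theorem_imp_inL
    prime_type_disjoint[OF \<Phi>] by fastforce

lemma prime_type_closed_snd:
  assumes \<Phi>: "prime_type M \<Lambda> \<Phi>" and "set ds \<subseteq> snd \<Phi>" "Imp a (disjs ds) \<in> \<Lambda>"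
  shows "a \<in> snd \<Phi>"
  using prime_type_split[OF \<Phi>, of "[a]" ds] assms prime_type_inL_snd[OF \<Phi>] theorem_imp_inL
    prime_type_disjoint[OF \<Phi>] by fastforce

lemma prime_type_leT_iff:
  assumes "prime_type M \<Lambda> \<Phi>" "prime_type M \<Lambda> \<Psi>"
  shows "leT \<Phi> \<Psi> \<longleftrightarrow> fst \<Phi> \<subseteq> fst \<Psi>"
  using assms prime_type_disjoint prime_type_cases prime_type_inL_snd unfolding leT_def by blast

lemma prime_type_eqI:
  assumes "prime_type M \<Lambda> \<Phi>" "prime_type M \<Lambda> \<Psi>" "fst \<Phi> \<subseteq> fst \<Psi>" "snd \<Phi> \<subseteq> snd \<Psi>"
  shows "\<Phi> = \<Psi>"
proof (rule prod_eqI)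
  show "fst \<Phi> = fst \<Psi>"
    using assms prime_type_disjoint prime_type_cases prime_type_inL_fst by blast
  show "snd \<Phi> = snd \<Psi>"
    using assms prime_type_disjoint prime_type_cases prime_type_inL_snd by blast
qed

end

locale admissible_logic =
  fixes M :: "modality set" and \<Lambda> :: "fml set"
  assumes admissible: "admissible M \<Lambda>"
begin

sublocale intuitionistic_logic
proof unfold_locales
  fix a b
  show "a \<in> \<Lambda> \<Longrightarrow> inL M a"
    using admissible[unfolded admissible_def, THEN conjunct1] by (auto simp: Lang_def)
  have "\<forall>a b. a \<in> \<Lambda> \<longrightarrow> Imp a b \<in> \<Lambda> \<longrightarrow> b \<in> \<Lambda>"
    using admissible unfolding admissible_def by (elim conjE) assumption
  then show "a \<in> \<Lambda> \<Longrightarrow> Imp a b \<in> \<Lambda> \<Longrightarrow> b \<in> \<Lambda>" by blast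
qed (insert admissible, simp_all add: admissible_def Lang_def)

lemma nxt_nec: "a \<in> \<Lambda> \<Longrightarrow> Nxt a \<in> \<Lambda>"
  using admissible unfolding admissible_def by blast

lemma ax_nxt_bot: "Imp (Nxt Bot) Bot \<in> \<Lambda>"
  using admissible unfolding admissible_def Neg_def by blast

lemma ax_nxt_conj: "inL M a \<Longrightarrow> inL M b \<Longrightarrow> Imp (And (Nxt a) (Nxt b)) (Nxt (And a b)) \<in> \<Lambda>"
  using admissible unfolding admissible_def Lang_def by simp

lemma ax_nxt_disj: "inL M a \<Longrightarrow> inL M b \<Longrightarrow> Imp (Nxt (Or a b)) (Or (Nxt a) (Nxt b)) \<in> \<Lambda>"
  using admissible unfolding admissible_def Lang_def by simp

lemma ax_nxt_imp: "inL M a \<Longrightarrow> inL M b \<Longrightarrow> Imp (Nxt (Imp a b)) (Imp (Nxt a) (Nxt b)) \<in> \<Lambda>"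
  using admissible unfolding admissible_def Lang_def by simp

lemma ax_dia_fold: "MDia \<in> M \<Longrightarrow> inL M a \<Longrightarrow> Imp (Or a (Nxt (Dia a))) (Dia a) \<in> \<Lambda>"
  using admissible unfolding admissible_def Lang_def by simp

lemma dia_mono: "MDia \<in> M \<Longrightarrow> Imp a b \<in> \<Lambda> \<Longrightarrow> Imp (Dia a) (Dia b) \<in> \<Lambda>"
  using admissible unfolding admissible_def by blast

lemma dia_induct: "MDia \<in> M \<Longrightarrow> Imp (Nxt a) a \<in> \<Lambda> \<Longrightarrow> Imp (Dia a) a \<in> \<Lambda>"
  using admissible unfolding admissible_def by blast

lemma ax_all_nxt: "MAll \<in> M \<Longrightarrow> inL M a \<Longrightarrow> Iff (All a) (Nxt (All a)) \<in> \<Lambda>"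
  using admissible unfolding admissible_def Lang_def by simp

lemma imp_nxt_mono:
  assumes h: "Imp a b \<in> \<Lambda>"
  shows "Imp (Nxt a) (Nxt b) \<in> \<Lambda>"
proof -
  have "inL M a" "inL M b" using theorem_imp_inL[OF h] by auto
  then show ?thesis using modus_ponens[OF nxt_nec[OF h] ax_nxt_imp] by blast
qed

lemma imp_nxt_conjs: "set gs \<subseteq> Lang M \<Longrightarrow> Imp (conjs (map Nxt gs)) (Nxt (conjs gs)) \<in> \<Lambda>"
proof (induction gs rule: conjs.induct)
  case 1
  then show ?case using imp_weaken[OF nxt_nec[OF Top_theorem]] by simp
next
  case (3 x y zs)
  have "inL M x" "inL M (conjs (y # zs))" using "3.prems" by (simp, intro inL_conjs) simp
  with 3 show ?case using imp_trans[OF imp_conj_mono[OF imp_refl] ax_nxt_conj] by simp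
qed (simp add: imp_refl)

lemma imp_nxt_disjs: "set ds \<subseteq> Lang M \<Longrightarrow> Imp (Nxt (disjs ds)) (disjs (map Nxt ds)) \<in> \<Lambda>"
proof (induction ds rule: disjs.induct)
  case 1
  then show ?case using ax_nxt_bot by simp
next
  case (3 x y zs)
  have "inL M x" "inL M (disjs (y # zs))" using "3.prems" by (simp, intro inL_disjs) simp
  with 3 show ?case using imp_trans[OF ax_nxt_disj imp_disj_mono[OF imp_refl]] by simp
qed (simp add: imp_refl)

lemma imp_dia_unfold:
  assumes M: "MDia \<in> M" and a: "inL M a"
  shows "Imp (Dia a) (Or a (Nxt (Dia a))) \<in> \<Lambda>"
proof -
  (* The induction rule for \<Diamond> applies to ?\<chi>, since \<circ>?\<chi> \<rightarrow> ?\<chi> is derivable. *)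
  let ?\<chi> = "Or a (Nxt (Dia a))"
  have nd: "inL M (Nxt (Dia a))" using M a by simp
  have a_dia: "Imp a (Dia a) \<in> \<Lambda>" by (rule imp_trans[OF ax_disjI1[OF a nd] ax_dia_fold[OF M a]])
  have nxt_dia: "Imp (Nxt (Dia a)) (Dia a) \<in> \<Lambda>"
    by (rule imp_trans[OF ax_disjI2[OF a nd] ax_dia_fold[OF M a]])
  have "Imp (Nxt ?\<chi>) (Or (Nxt a) (Nxt (Nxt (Dia a)))) \<in> \<Lambda>" by (rule ax_nxt_disj[OF a nd])
  moreover have "Imp (Or (Nxt a) (Nxt (Nxt (Dia a)))) (Nxt (Dia a)) \<in> \<Lambda>"
    by (rule imp_disjE[OF imp_nxt_mono[OF a_dia] imp_nxt_mono[OF nxt_dia]])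
  moreover have "Imp (Nxt (Dia a)) ?\<chi> \<in> \<Lambda>" by (rule ax_disjI2[OF a nd])
  ultimately have "Imp (Nxt ?\<chi>) ?\<chi> \<in> \<Lambda>" by (blast intro: imp_trans)
  then have "Imp (Dia ?\<chi>) ?\<chi> \<in> \<Lambda>" by (rule dia_induct[OF M])
  then show ?thesis by (rule imp_trans[OF dia_mono[OF M ax_disjI1[OF a nd]]])
qed

lemma prime_type_Dia_fst:
  assumes \<Phi>: "prime_type M \<Lambda> \<Phi>" and h: "Dia a \<in> fst \<Phi>"
  shows "a \<in> fst \<Phi> \<or> Nxt (Dia a) \<in> fst \<Phi>"
proof -
  have M: "MDia \<in> M" and a: "inL M a" using prime_type_inL_fst[OF \<Phi> h] by auto
  then show ?thesis
    using prime_type_split[OF \<Phi>, of "[Dia a]" "[a, Nxt (Dia a)]"] imp_dia_unfold[OF M a] h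
      prime_type_disjoint[OF \<Phi>] by auto
qed

lemma prime_type_Dia_snd:
  assumes \<Phi>: "prime_type M \<Lambda> \<Phi>" and h: "Dia a \<in> snd \<Phi>"
  shows "a \<in> snd \<Phi>" and "Nxt (Dia a) \<in> snd \<Phi>"
proof -
  have M: "MDia \<in> M" and a: "inL M a" using prime_type_inL_snd[OF \<Phi> h] by auto
  then have "Imp a (Dia a) \<in> \<Lambda>" "Imp (Nxt (Dia a)) (Dia a) \<in> \<Lambda>"
    using imp_trans[OF ax_disjI1 ax_dia_fold] imp_trans[OF ax_disjI2 ax_dia_fold] by simp_all
  then show "a \<in> snd \<Phi>" "Nxt (Dia a) \<in> snd \<Phi>"
    using prime_type_closed_snd[OF \<Phi>, of "[Dia a]"] h by simp_all
qed

lemma prime_type_All_fst: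
  assumes \<Phi>: "prime_type M \<Lambda> \<Phi>"
  shows "All a \<in> fst \<Phi> \<longleftrightarrow> Nxt (All a) \<in> fst \<Phi>"
proof
  assume h: "All a \<in> fst \<Phi>"
  show "Nxt (All a) \<in> fst \<Phi>"
    using prime_type_closed_fst[OF \<Phi>, of "[All a]"] h iff_theoremD(1)[OF ax_all_nxt]
      prime_type_inL_fst[OF \<Phi> h] by simp
next
  assume h: "Nxt (All a) \<in> fst \<Phi>"
  show "All a \<in> fst \<Phi>"
    using prime_type_closed_fst[OF \<Phi>, of "[Nxt (All a)]"] h iff_theoremD(2)[OF ax_all_nxt]
      prime_type_inL_fst[OF \<Phi> h] by simp
qed

lemma prime_type_All_snd:
  assumes \<Phi>: "prime_type M \<Lambda> \<Phi>"
  shows "All a \<in> snd \<Phi> \<longleftrightarrow> Nxt (All a) \<in> snd \<Phi>"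
proof
  assume h: "All a \<in> snd \<Phi>"
  show "Nxt (All a) \<in> snd \<Phi>"
    using prime_type_closed_snd[OF \<Phi>, of "[All a]"] h iff_theoremD(2)[OF ax_all_nxt]
      prime_type_inL_snd[OF \<Phi> h] by simp
next
  assume h: "Nxt (All a) \<in> snd \<Phi>"
  show "All a \<in> snd \<Phi>"
    using prime_type_closed_snd[OF \<Phi>, of "[Nxt (All a)]"] h iff_theoremD(1)[OF ax_all_nxt]
      prime_type_inL_snd[OF \<Phi> h] by simp
qed

lemma prime_type_conds:
  assumes \<Phi>: "prime_type M \<Lambda> \<Phi>"
  shows "type_conds \<Phi>"
proof -
  note split = prime_type_split[OF \<Phi>] and disjoint = prime_type_disjoint[OF \<Phi>]
  note L1 = prime_type_inL_fst[OF \<Phi>] and L2 = prime_type_inL_snd[OF \<Phi>]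
  show ?thesis unfolding type_conds_def Let_def
  proof (intro conjI allI impI)
    show "fst \<Phi> \<inter> snd \<Phi> = {}" using disjoint by blast
    show "Bot \<notin> fst \<Phi>" using split[of "[Bot]" "[]"] imp_refl[of Bot] disjoint by auto
  next
    fix a b assume h: "And a b \<in> fst \<Phi>"
    then show "a \<in> fst \<Phi>" "b \<in> fst \<Phi>"
      using prime_type_closed_fst[OF \<Phi>, of "[And a b]"] L1[OF h] ax_conjD1 ax_conjD2 by auto
  next
    fix a b assume h: "And a b \<in> snd \<Phi>"
    then show "a \<in> snd \<Phi> \<or> b \<in> snd \<Phi>"
      using split[of "[a, b]" "[And a b]"] imp_refl[of "And a b"] L2[OF h] disjoint by auto
  next
    fix a b assume h: "Or a b \<in> fst \<Phi>"
    then show "a \<in> fst \<Phi> \<or> b \<in> fst \<Phi>"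
      using split[of "[Or a b]" "[a, b]"] imp_refl[of "Or a b"] L1[OF h] disjoint by auto
  next
    fix a b assume h: "Or a b \<in> snd \<Phi>"
    then show "a \<in> snd \<Phi>" "b \<in> snd \<Phi>"
      using prime_type_closed_snd[OF \<Phi>, of "[Or a b]"] L2[OF h] ax_disjI1 ax_disjI2 by auto
  next
    fix a b assume h: "Imp a b \<in> fst \<Phi>"
    have "inL M a" "inL M b" using L1[OF h] by auto
    moreover from this have "Imp (And (Imp a b) a) b \<in> \<Lambda>" by (intro imp_uncurry imp_refl) simp
    ultimately show "a \<in> snd \<Phi> \<or> b \<in> fst \<Phi>"
      using split[of "[Imp a b, a]" "[b]"] h disjoint by auto
  next
    fix a b assume h: "Imp a b \<in> snd \<Phi>"
    then show "b \<in> snd \<Phi>" using prime_type_closed_snd[OF \<Phi>, of "[Imp a b]"] L2[OF h] ax_K by simp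
  next
    fix a assume "Dia a \<in> snd \<Phi>"
    then show "a \<in> snd \<Phi>" by (rule prime_type_Dia_snd[OF \<Phi>])
  qed
qed

lemma prime_type_next_type:
  assumes \<Phi>: "prime_type M \<Lambda> \<Phi>"
  shows "prime_type M \<Lambda> (next_type \<Phi>)"
proof -
  have L: "fst (next_type \<Phi>) \<union> snd (next_type \<Phi>) = Lang M"
    using prime_type_cases[OF \<Phi>, of "Nxt _"] prime_type_inL_fst[OF \<Phi>, of "Nxt _"]
      prime_type_inL_snd[OF \<Phi>, of "Nxt _"]
    unfolding next_type_def Lang_def by auto
  have "\<not> derives \<Lambda> (fst (next_type \<Phi>)) (snd (next_type \<Phi>))"
  proof
    assume "derives \<Lambda> (fst (next_type \<Phi>)) (snd (next_type \<Phi>))"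
    then obtain gs ds where gs: "set gs \<subseteq> fst (next_type \<Phi>)" and ds: "set ds \<subseteq> snd (next_type \<Phi>)"
      and derivation: "Imp (conjs gs) (disjs ds) \<in> \<Lambda>"
      unfolding derives_def by blast
    have "Imp (conjs (map Nxt gs)) (disjs (map Nxt ds)) \<in> \<Lambda>"
      using imp_nxt_conjs[of gs] imp_nxt_mono[OF derivation] imp_nxt_disjs[of ds] gs ds L
      by (blast intro: imp_trans)
    moreover have "set (map Nxt gs) \<subseteq> fst \<Phi>" "set (map Nxt ds) \<subseteq> snd \<Phi>"
      using gs ds by (auto simp: next_type_def)
    ultimately show False using prime_type_no_derivation[OF \<Phi>] by blast
  qed
  with L show ?thesis unfolding prime_type_def by blast
qed

lemma sensible_next_type:
  assumes \<Phi>: "prime_type M \<Lambda> \<Phi>"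
  shows "sensible \<Phi> (next_type \<Phi>)"
  using prime_type_Dia_fst[OF \<Phi>] prime_type_Dia_snd(2)[OF \<Phi>] prime_type_All_fst[OF \<Phi>]
    prime_type_All_snd[OF \<Phi>]
  unfolding sensible_def next_type_def by simp

lemma sensible_imp_next_type:
  assumes \<Phi>: "prime_type M \<Lambda> \<Phi>" and \<Psi>: "prime_type M \<Lambda> \<Psi>" and "sensible \<Phi> \<Psi>"
  shows "\<Psi> = next_type \<Phi>"
proof (rule sym, rule prime_type_eqI[OF prime_type_next_type[OF \<Phi>] \<Psi>])
  show "fst (next_type \<Phi>) \<subseteq> fst \<Psi>" "snd (next_type \<Phi>) \<subseteq> snd \<Psi>"
    using \<open>sensible \<Phi> \<Psi>\<close> unfolding sensible_def next_type_def by auto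
qed

lemma Sc_iff_next_type:
  "prime_type M \<Lambda> \<Phi> \<Longrightarrow> prime_type M \<Lambda> \<Psi> \<Longrightarrow> Sc \<Phi> \<Psi> \<longleftrightarrow> \<Psi> = next_type \<Phi>"
  using sensible_next_type sensible_imp_next_type unfolding Sc_def by blast

lemma prime_type_imp_witness:
  assumes \<Phi>: "prime_type M \<Lambda> \<Phi>" and h: "Imp a b \<in> snd \<Phi>"
  obtains \<Psi> where "prime_type M \<Lambda> \<Psi>" "leT \<Phi> \<Psi>" "a \<in> fst \<Psi>" "b \<in> snd \<Psi>"
proof -
  have a: "inL M a" and b: "inL M b" using prime_type_inL_snd[OF \<Phi> h] by auto
  have \<Phi>_L: "fst \<Phi> \<subseteq> Lang M" using prime_type_inL_fst[OF \<Phi>] by auto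
  have "\<not> derives \<Lambda> (insert a (fst \<Phi>)) {b}"
  proof
    assume "derives \<Lambda> (insert a (fst \<Phi>)) {b}"
    then have "derives \<Lambda> (fst \<Phi>) {Imp a b}" by (rule derives_imp[OF \<Phi>_L a b])
    then have "derives \<Lambda> (fst \<Phi>) (snd \<Phi>)" by (rule derives_mono) (use h in auto)
    then show False using \<Phi> by (simp add: prime_type_def)
  qed
  then obtain \<Psi> where \<Psi>: "prime_type M \<Lambda> \<Psi>" "insert a (fst \<Phi>) \<subseteq> fst \<Psi>" "{b} \<subseteq> snd \<Psi>"
    using lindenbaum[of "insert a (fst \<Phi>)" "{b}"] \<Phi>_L a b by auto
  then have "leT \<Phi> \<Psi>" using prime_type_leT_iff[OF \<Phi>] by auto
  with \<Psi> show ?thesis using that by auto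
qed

end

theorem proposition5p6:
  fixes M :: "modality set" and \<Lambda> :: "fml set"
  assumes "admissible M \<Lambda>"
  shows "det_weak_quasimodel (Wc M \<Lambda>) leT Sc id"
proof -
  interpret admissible_logic M \<Lambda> by (rule admissible_logic.intro) (fact assms)
  show ?thesis
    unfolding det_weak_quasimodel_def id_apply
  proof (intro conjI ballI allI impI)
    fix \<Phi> \<Psi> assume "leT \<Phi> \<Psi>" "leT \<Psi> \<Phi>"
    then show "\<Phi> = \<Psi>" by (rule leT_antisym)
  next
    fix \<Phi> a b assume "\<Phi> \<in> Wc M \<Lambda>" "Imp a b \<in> snd \<Phi>"
    then show "\<exists>\<Psi>\<in>Wc M \<Lambda>. leT \<Phi> \<Psi> \<and> a \<in> fst \<Psi> \<and> b \<in> snd \<Psi>"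
      by (meson mem_Wc_iff prime_type_imp_witness)
  next
    fix \<Phi> assume "\<Phi> \<in> Wc M \<Lambda>"
    then have \<Phi>: "prime_type M \<Lambda> \<Phi>" by (simp add: mem_Wc_iff)
    show "\<exists>!\<Psi>. \<Psi> \<in> Wc M \<Lambda> \<and> Sc \<Phi> \<Psi>"
      using Sc_iff_next_type[OF \<Phi>] prime_type_next_type[OF \<Phi>] mem_Wc_iff by blast
  next
    fix \<Phi> \<Psi> \<Phi>' \<Psi>'
    assume "\<Phi> \<in> Wc M \<Lambda>" "\<Psi> \<in> Wc M \<Lambda>" "\<Phi>' \<in> Wc M \<Lambda>" "\<Psi>' \<in> Wc M \<Lambda>"
      and "leT \<Phi> \<Psi>" "Sc \<Phi> \<Phi>'" "Sc \<Psi> \<Psi>'"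
    then show "leT \<Phi>' \<Psi>'" using Sc_iff_next_type next_type_mono mem_Wc_iff by metis
  qed (auto simp: mem_Wc_iff Sc_def intro: leT_refl leT_trans prime_type_conds)
qed

end
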